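(* Let $n\ge4$ and let $\mathcal{U}$ be a non-degenerate $n$-gon with $\operatorname{Len}(\mathcal{U})=1$ whose interior angles satisfy $\frac{\pi}{2}\le\alpha_i<\pi$. Then any corresponding folded ribbon unknot $\mathcal{U}_{w,F}$ has ribbon width $w\le \frac{1}{n\cot(\frac{\pi}{n})}$, and $w$ is maximized when $\mathcal{U}$ is equiangular.
   Context: Non-degenerate $n$-gon: side lengths nonzero, interior angles not equal to $\pi$. For width $w>0$, the folded ribbon $\mathcal{U}_{w,F}$ is a flat strip of width $w$ centred on $\mathcal{U}$ (boundary parallel to and at distance $w/2$ from each edge), folded at each vertex along a fold line through the vertex perpendicular to the bisector of the angle there; it must be a piecewise-linear immersion of an annulus or Möbius band into the plane whose only singularities are the pairwise disjoint fold lines, with consistent crossing information. $F$ is the folding information (which layer lies on top at each fold). *)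

theory Defs
  imports "HOL-Analysis.Analysis"
begin

text \<open>An n-gon is given by its vertices v 0, ..., v (n-1) in the plane (modelled as
  complex numbers); indices are taken cyclically.\<close>

definition nxt :: "nat \<Rightarrow> nat \<Rightarrow> nat" where
  "nxt n i = Suc i mod n"

definition prv :: "nat \<Rightarrow> nat \<Rightarrow> nat" where
  "prv n i = (i + n - 1) mod n"

definition edge_seg :: "nat \<Rightarrow> (nat \<Rightarrow> complex) \<Rightarrow> nat \<Rightarrow> complex set" where
  "edge_seg n v i = closed_segment (v i) (v (nxt n i))"

definition simple_polygon :: "nat \<Rightarrow> (nat \<Rightarrow> complex) \<Rightarrow> bool" where
  "simple_polygon n v \<longleftrightarrow> 3 \<le> n \<and>
     (\<forall>i<n. \<forall>j<n. i \<noteq> j \<longrightarrow>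
        (if j = nxt n i then edge_seg n v i \<inter> edge_seg n v j = {v j}
         else if i = nxt n j then edge_seg n v i \<inter> edge_seg n v j = {v i}
         else edge_seg n v i \<inter> edge_seg n v j = {}))"

text \<open>Signed (shoelace) area: positive iff the polygon is oriented counterclockwise.\<close>
definition signed_area :: "nat \<Rightarrow> (nat \<Rightarrow> complex) \<Rightarrow> real" where
  "signed_area n v = (\<Sum>i<n. Im (cnj (v i) * v (nxt n i))) / 2"

definition turn_angle :: "nat \<Rightarrow> (nat \<Rightarrow> complex) \<Rightarrow> nat \<Rightarrow> real" where
  "turn_angle n v i = Arg ((v (nxt n i) - v i) / (v i - v (prv n i)))"

text \<open>Interior angle at vertex i (angle of the bounded region), computed from the
  signed exterior (turning) angle relative to the orientation of the polygon.\<close>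
definition interior_angle :: "nat \<Rightarrow> (nat \<Rightarrow> complex) \<Rightarrow> nat \<Rightarrow> real" where
  "interior_angle n v i = pi - sgn (signed_area n v) * turn_angle n v i"

definition nondegenerate_ngon :: "nat \<Rightarrow> (nat \<Rightarrow> complex) \<Rightarrow> bool" where
  "nondegenerate_ngon n v \<longleftrightarrow> simple_polygon n v \<and>
     (\<forall>i<n. v (nxt n i) \<noteq> v i) \<and> (\<forall>i<n. interior_angle n v i \<noteq> pi)"

definition polygon_length :: "nat \<Rightarrow> (nat \<Rightarrow> complex) \<Rightarrow> real" where
  "polygon_length n v = (\<Sum>i<n. cmod (v (nxt n i) - v i))"

definition equiangular :: "nat \<Rightarrow> (nat \<Rightarrow> complex) \<Rightarrow> bool" where
  "equiangular n v \<longleftrightarrow> (\<forall>i<n. \<forall>j<n. interior_angle n v i = interior_angle n v j)"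

text \<open>Edge i carries the piece of the strip of width w
  centred on the line through edge i; the fold at vertex i is along the line through v i
  perpendicular to the angle bisector at v i (its normal is u i - u (i-1), u the unit edge
  directions).  The piece of edge i is bounded by the fold lines at v i and v (i+1); the
  fold lines (inside the ribbon) must be pairwise disjoint, i.e. the two fold segments
  bounding each piece must not meet in the (open) strip.  F is the folding information
  (which layer is on top at each fold); every choice gives consistent crossing information.\<close>

definition edge_dir :: "nat \<Rightarrow> (nat \<Rightarrow> complex) \<Rightarrow> nat \<Rightarrow> complex" where
  "edge_dir n v i = sgn (v (nxt n i) - v i)"

definition ribbon_strip :: "nat \<Rightarrow> (nat \<Rightarrow> complex) \<Rightarrow> real \<Rightarrow> nat \<Rightarrow> complex set" where
  "ribbon_strip n v w i = {z. \<bar>Im ((z - v i) * cnj (edge_dir n v i))\<bar> < w / 2}"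

definition fold_line :: "nat \<Rightarrow> (nat \<Rightarrow> complex) \<Rightarrow> nat \<Rightarrow> complex set" where
  "fold_line n v i =
     {z. Re ((z - v i) * cnj (edge_dir n v i - edge_dir n v (prv n i))) = 0}"

definition folded_ribbon ::
    "nat \<Rightarrow> (nat \<Rightarrow> complex) \<Rightarrow> real \<Rightarrow> (nat \<Rightarrow> bool) \<Rightarrow> bool" where
  "folded_ribbon n v w F \<longleftrightarrow> 0 < w \<and>
     (\<forall>i<n. fold_line n v i \<inter> fold_line n v (nxt n i) \<inter> ribbon_strip n v w i = {})"

end

theory Submission
  imports Defs
begin

(* Let \<beta>_i = (pi - \<alpha>_i) / 2 be half the exterior angle at v_i. Seen from edge i, the fold lines
   at its two ends meet at distance l_i / (cot \<beta>_i + cot \<beta>_(i+1)) from the line of the edge, so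
   they avoid the ribbon exactly when w (cot \<beta>_i + cot \<beta>_(i+1)) \<le> 2 l_i; summing over all edges
   gives w \<Sum> cot \<beta>_i \<le> Len = 1. As the polygon is simple and turns to the same side at every
   vertex, the turning number theorem gives \<Sum> \<beta>_i = pi, and strict convexity of cot on (0, pi/2)
   gives \<Sum> cot \<beta>_i \<ge> n cot (pi/n), with equality only if every \<beta>_i = pi/n. The regular n-gon
   attains the bound.

   The turning number theorem is proved by a discrete form of Hopf's argument. For two disjoint
   edges, the four vectors joining them lie in an open half-plane, which gives a four-term relation
   between the angles under which each edge is seen from the endpoints of the other. These relations
   rearrange the total turning into two fans of angles seen from the lowest vertex, which telescope,
   plus twice the turn at that vertex. *)

section \<open>Cyclic indices\<close>

lemma nxt_less: "0 < n \<Longrightarrow> nxt n i < n"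
  by (simp add: nxt_def)

lemma prv_less: "0 < n \<Longrightarrow> prv n i < n"
  by (simp add: prv_def)

lemma nxt_add_mod: "nxt n ((k + m) mod n) = (Suc k + m) mod n"
  by (simp add: nxt_def mod_Suc_eq)

lemma prv_Suc_add_mod: "0 < n \<Longrightarrow> prv n ((Suc k + m) mod n) = (k + m) mod n"
  unfolding prv_def
  by (metis add_Suc_right add_Suc_shift diff_Suc_1 gr0_implies_Suc mod_add_left_eq mod_add_self2)

lemma nxt_prv: "0 < n \<Longrightarrow> i < n \<Longrightarrow> nxt n (prv n i) = i"
  by (simp add: nxt_def prv_def mod_Suc_eq)

lemma prv_nxt: "0 < n \<Longrightarrow> i < n \<Longrightarrow> prv n (nxt n i) = i"
  using prv_Suc_add_mod[of n i 0] by (simp add: nxt_def)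

lemma add_mod_eq_iff:
  fixes i j n :: nat
  assumes "i < n" "j < n"
  shows "(i + m) mod n = (j + m) mod n \<longleftrightarrow> i = j"
proof
  assume "(i + m) mod n = (j + m) mod n"
  then have "i mod n = j mod n"
    by (simp add: nat_mod_eq_iff)
  then show "i = j"
    using assms by simp
qed simp

lemma nxt_neq: "2 \<le> n \<Longrightarrow> i < n \<Longrightarrow> nxt n i \<noteq> i"
  unfolding nxt_def by (cases "Suc i = n") auto

lemma nxt_nxt_neq: "3 \<le> n \<Longrightarrow> i < n \<Longrightarrow> nxt n (nxt n i) \<noteq> i"
  using add_mod_eq_iff[of 2 n 0 i] by (simp add: nxt_def mod_Suc_eq)

lemma nxt_inj: "i < n \<Longrightarrow> j < n \<Longrightarrow> nxt n i = nxt n j \<longleftrightarrow> i = j"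
  using add_mod_eq_iff[of i n j 1] by (simp add: nxt_def)

lemma sum_add_mod:
  fixes n c :: nat
  shows "(\<Sum>k<n. f ((k + c) mod n)) = (\<Sum>k<n. f k)"
proof -
  have "inj_on (\<lambda>k. (k + c) mod n) {..<n}"
  proof (rule inj_onI)
    fix x y assume "x \<in> {..<n}" "y \<in> {..<n}" "(x + c) mod n = (y + c) mod n"
    then show "x = y"
      using add_mod_eq_iff[of x n y c] by simp
  qed
  moreover have "(\<lambda>k. (k + c) mod n) ` {..<n} \<subseteq> {..<n}"
    by auto
  ultimately have "(\<lambda>k. (k + c) mod n) ` {..<n} = {..<n}"
    by (intro endo_inj_surj) auto
  then show ?thesis
    using sum.reindex[of "\<lambda>k. (k + c) mod n" "{..<n}" f] \<open>inj_on _ _\<close> by simp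
qed

section \<open>Signed angles\<close>

definition signed_angle :: "complex \<Rightarrow> complex \<Rightarrow> real" where
  "signed_angle a b = Arg (b / a)"

lemma signed_angle_uminus [simp]: "signed_angle (- a) (- b) = signed_angle a b"
  by (simp add: signed_angle_def)

lemma Arg_divide_eq_diff:
  assumes "z \<noteq> 0" "w \<noteq> 0" "- pi < Arg z - Arg w" "Arg z - Arg w \<le> pi"
  shows "Arg (z / w) = Arg z - Arg w"
  using Arg_divide'[OF assms(1,2)] assms(3,4) by auto

lemma signed_angle_in_half_plane:
  assumes "c \<noteq> 0" "Re (a / c) > 0" "Re (b / c) > 0"
  shows "signed_angle a b = Arg (b / c) - Arg (a / c)"
proof -
  have "\<bar>Arg (a / c)\<bar> < pi / 2" "\<bar>Arg (b / c)\<bar> < pi / 2"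
    using assms Arg_Re_pos by auto
  moreover have "a / c \<noteq> 0" "b / c \<noteq> 0"
    using assms by auto
  ultimately have "Arg ((b / c) / (a / c)) = Arg (b / c) - Arg (a / c)"
    by (intro Arg_divide_eq_diff) auto
  moreover have "(b / c) / (a / c) = b / a"
    using assms(1) by (simp add: field_simps)
  ultimately show ?thesis
    unfolding signed_angle_def by metis
qed

text \<open>The four vectors from one segment to a disjoint one lie in an open half-plane (they form the
  Minkowski difference of the segments, a compact convex set avoiding 0), where angles add up.\<close>
lemma signed_angle_disjoint_segments:
  assumes "closed_segment p1 p2 \<inter> closed_segment q1 q2 = {}"
  shows "signed_angle (q1 - p1) (q2 - p1) + signed_angle (q2 - p1) (q2 - p2)
       = signed_angle (q1 - p1) (q1 - p2) + signed_angle (q1 - p2) (q2 - p2)"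
proof -
  define S where "S = {x - y | x y. x \<in> closed_segment q1 q2 \<and> y \<in> closed_segment p1 p2}"
  have "closed S"
    unfolding S_def by (intro compact_imp_closed compact_differences) auto
  moreover have "S = (\<Union>x \<in> closed_segment q1 q2. \<Union>y \<in> closed_segment p1 p2. {x - y})"
    unfolding S_def by blast
  then have "convex S"
    by (simp add: convex_differences)
  moreover have "0 \<notin> S"
    using assms unfolding S_def by auto
  ultimately obtain c b where c: "c \<noteq> 0" "0 < b" "\<forall>x\<in>S. inner c x > b"
    using separating_hyperplane_closed_0 by blast
  have pos: "Re (x / c) > 0" if "x \<in> S" for x
  proof -
    have "Re (x / c) = inner c x / (cmod c)\<^sup>2"
      by (simp add: Re_divide cmod_power2 inner_complex_def algebra_simps)
    then show ?thesis
      using c that by force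
  qed
  have "q1 - p1 \<in> S" "q2 - p1 \<in> S" "q1 - p2 \<in> S" "q2 - p2 \<in> S"
    unfolding S_def by auto
  then show ?thesis
    using signed_angle_in_half_plane[OF c(1) pos pos] by simp
qed

lemma signed_angle_add:
  assumes "a \<noteq> 0" "b \<noteq> 0" "Arg (b / a) \<noteq> pi"
  shows "signed_angle a (a + b) + signed_angle (a + b) b = signed_angle a b"
proof -
  define z where "z = b / a"
  have z0: "z \<noteq> 0"
    using assms by (simp add: z_def)
  have not_neg: "\<not> (Re z < 0 \<and> Im z = 0)"
    using assms(3) Arg_eq_pi[of z] by (simp add: z_def)
  then have z1: "1 + z \<noteq> 0"
    by (auto simp: complex_eq_iff)
  have "- pi < Arg z - Arg (1 + z) \<and> Arg z - Arg (1 + z) \<le> pi"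
  proof (cases "Im z" "0 :: real" rule: linorder_cases)
    case less
    then have "Arg z < 0" "Arg (1 + z) < 0"
      using Arg_neg_iff by auto
    then show ?thesis
      using Arg_bounded[of z] Arg_bounded[of "1 + z"] by linarith
  next
    case equal
    with not_neg z0 have "Re z > 0"
      by (auto simp: complex_eq_iff)
    with equal have "Arg z = 0" "Arg (1 + z) = 0"
      by (auto simp: Arg_eq_0 complex_is_Real_iff)
    then show ?thesis
      by simp
  next
    case greater
    then have "0 < Arg z \<and> Arg z < pi" "0 < Arg (1 + z) \<and> Arg (1 + z) < pi"
      using Arg_lt_pi by auto
    then show ?thesis
      by linarith
  qed
  then have "Arg (z / (1 + z)) = Arg z - Arg (1 + z)"
    using z0 z1 by (intro Arg_divide_eq_diff) auto
  moreover have "(a + b) / a = 1 + z" "b / (a + b) = z / (1 + z)"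
    using assms(1) z1 by (simp_all add: z_def field_simps)
  ultimately show ?thesis
    unfolding signed_angle_def z_def[symmetric] by simp
qed

lemma Arg_ne_pi_if_segments_meet_at_vertex:
  assumes meet: "closed_segment a b \<inter> closed_segment b c = {b}" and "a \<noteq> b" "c \<noteq> b"
  shows "Arg ((c - b) / (b - a)) \<noteq> pi"
proof
  assume "Arg ((c - b) / (b - a)) = pi"
  then have "Re ((c - b) / (b - a)) < 0" "Im ((c - b) / (b - a)) = 0"
    using Arg_eq_pi by auto
  then obtain r where r: "0 < r" "(c - b) / (b - a) = - of_real r"
    by (intro that[of "- Re ((c - b) / (b - a))"]) (auto simp: complex_eq_iff)
  then have c: "c = b - of_real r * (b - a)"
    using assms(2) by (simp add: field_simps)
  show False
  proof (cases "r \<le> 1")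
    case True
    have "c = (1 - (1 - r)) *\<^sub>R a + (1 - r) *\<^sub>R b"
      unfolding c scaleR_conv_of_real by (simp add: algebra_simps)
    then have "c \<in> closed_segment a b"
      using True r(1) unfolding in_segment by (intro conjI exI[of _ "1 - r"]) auto
    then show False
      using meet assms(3) by auto
  next
    case False
    have "a = (1 - 1 / r) *\<^sub>R b + (1 / r) *\<^sub>R c"
      unfolding c scaleR_conv_of_real using r(1) by (simp add: field_simps)
    then have "a \<in> closed_segment b c"
      using False unfolding in_segment by (intro conjI exI[of _ "1 / r"]) auto
    then show False
      using meet assms(2) by auto
  qed
qed

definition upper_half_plane :: "complex \<Rightarrow> bool" where
  "upper_half_plane z \<longleftrightarrow> Im z > 0 \<or> (Im z = 0 \<and> Re z > 0)"

lemma upper_half_plane_Arg: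
  assumes "upper_half_plane z"
  shows "z \<noteq> 0" "0 \<le> Arg z" "Arg z < pi"
proof -
  show "z \<noteq> 0" "0 \<le> Arg z"
    using assms Arg_less_0[of z] by (auto simp: upper_half_plane_def)
  have "Arg z \<noteq> pi"
    using assms Arg_eq_pi[of z] by (auto simp: upper_half_plane_def)
  then show "Arg z < pi"
    using Arg_le_pi[of z] by linarith
qed

lemma signed_angle_upper_half_plane:
  assumes "upper_half_plane a" "upper_half_plane b"
  shows "signed_angle a b = Arg b - Arg a"
  unfolding signed_angle_def
  using upper_half_plane_Arg[OF assms(1)] upper_half_plane_Arg[OF assms(2)]
  by (intro Arg_divide_eq_diff) auto

section \<open>The turning number of a simple polygon\<close>

definition view_angle :: "(nat \<Rightarrow> complex) \<Rightarrow> nat \<Rightarrow> nat \<Rightarrow> real" where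
  "view_angle V i j = signed_angle (V j - V i) (V (Suc j) - V i)"

lemma view_angle_swap:
  assumes "closed_segment (V i) (V (Suc i)) \<inter> closed_segment (V j) (V (Suc j)) = {}"
  shows "view_angle V i j + view_angle V (Suc j) i = view_angle V j i + view_angle V (Suc i) j"
proof -
  have "signed_angle (V i - V (Suc j)) (V (Suc i) - V (Suc j))
      = signed_angle (V (Suc j) - V i) (V (Suc j) - V (Suc i))"
    "signed_angle (V i - V j) (V (Suc i) - V j) = signed_angle (V j - V i) (V j - V (Suc i))"
    using signed_angle_uminus[of "V (Suc j) - V i" "V (Suc j) - V (Suc i)"]
      signed_angle_uminus[of "V j - V i" "V j - V (Suc i)"] by simp_all
  then show ?thesis
    using signed_angle_disjoint_segments[OF assms] unfolding view_angle_def by linarith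
qed

context
  fixes V :: "nat \<Rightarrow> complex" and n :: nat
  assumes three_le: "3 \<le> n"
    and nonadjacent_disjoint: "\<And>i j. i + 2 \<le> j \<Longrightarrow> j < n \<Longrightarrow> \<not> (i = 0 \<and> j = n - 1) \<Longrightarrow>
      closed_segment (V i) (V (Suc i)) \<inter> closed_segment (V j) (V (Suc j)) = {}"
begin

lemma view_angle_telescope:
  assumes "a \<le> b" and edges: "\<And>j. a \<le> j \<Longrightarrow> j < b \<Longrightarrow> i + 2 \<le> j \<and> j < n \<and> \<not> (i = 0 \<and> j = n - 1)"
  shows "(\<Sum>j=a..<b. view_angle V i j) + view_angle V b i
       = view_angle V a i + (\<Sum>j=a..<b. view_angle V (Suc i) j)"
  using assms(1)
proof (induction rule: dec_induct)
  case (step m)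
  have "view_angle V i m + view_angle V (Suc m) i = view_angle V m i + view_angle V (Suc i) m"
    using step.hyps edges[of m] by (intro view_angle_swap nonadjacent_disjoint) auto
  then show ?case
    using step by simp
qed simp

lemma view_angle_fan:
  assumes "1 \<le> i" "i \<le> n - 1"
  shows "(\<Sum>j=Suc i..<n. view_angle V i j) + (\<Sum>k=i..<n-1. view_angle V n k)
       = (\<Sum>k=i..<n-1. view_angle V k (Suc k) + view_angle V (k + 2) k)"
  using assms(2,1)
proof (induction rule: inc_induct)
  case (step i)
  have "(\<Sum>j=i+2..<n. view_angle V i j) + view_angle V n i
      = view_angle V (i + 2) i + (\<Sum>j=i+2..<n. view_angle V (Suc i) j)"
    using step by (intro view_angle_telescope) auto
  moreover have "(\<Sum>j=Suc i..<n. view_angle V i j) = view_angle V i (Suc i) + (\<Sum>j=i+2..<n. view_angle V i j)"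
    "(\<Sum>k=i..<n-1. view_angle V n k) = view_angle V n i + (\<Sum>k=Suc i..<n-1. view_angle V n k)"
    "(\<Sum>k=i..<n-1. view_angle V k (Suc k) + view_angle V (k + 2) k)
      = view_angle V i (Suc i) + view_angle V (i + 2) i
        + (\<Sum>k=Suc i..<n-1. view_angle V k (Suc k) + view_angle V (k + 2) k)"
    using step.hyps by (subst sum.atLeast_Suc_lessThan; simp)+
  ultimately show ?case
    using step by simp
qed simp

lemma view_angle_turns:
  "(\<Sum>j=1..<n-1. view_angle V 0 j) + view_angle V (n - 1) 0 + view_angle V 1 (n - 1)
     + (\<Sum>k=1..<n-1. view_angle V n k)
   = (\<Sum>k<n-1. view_angle V k (Suc k) + view_angle V (k + 2) k)"
proof -
  have "(\<Sum>j=2..<n-1. view_angle V 0 j) + view_angle V (n - 1) 0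
      = view_angle V 2 0 + (\<Sum>j=2..<n-1. view_angle V 1 j)"
    using three_le view_angle_telescope[of 2 "n - 1" 0] by auto
  moreover have "(\<Sum>j=1..<n-1. view_angle V 0 j) = view_angle V 0 1 + (\<Sum>j=2..<n-1. view_angle V 0 j)"
    "(\<Sum>j=2..<n-1. view_angle V 1 j) + view_angle V 1 (n - 1) = (\<Sum>j=2..<n. view_angle V 1 j)"
    "(\<Sum>k<n-1. view_angle V k (Suc k) + view_angle V (k + 2) k)
      = view_angle V 0 1 + view_angle V 2 0
        + (\<Sum>k=1..<n-1. view_angle V k (Suc k) + view_angle V (k + 2) k)"
    using three_le sum.atLeastLessThan_Suc[of 2 "n - 1" "view_angle V 1"]
    by (auto simp: atLeast0LessThan[symmetric] sum.atLeast_Suc_lessThan numeral_2_eq_2)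
  moreover have "(\<Sum>j=2..<n. view_angle V 1 j) + (\<Sum>k=1..<n-1. view_angle V n k)
      = (\<Sum>k=1..<n-1. view_angle V k (Suc k) + view_angle V (k + 2) k)"
    using view_angle_fan[of 1] three_le by (simp add: numeral_2_eq_2)
  ultimately show ?thesis
    by simp
qed

end

lemma turn_eq_view_angles:
  assumes "closed_segment (V k) (V (Suc k)) \<inter> closed_segment (V (Suc k)) (V (Suc (Suc k))) = {V (Suc k)}"
    and "V (Suc k) \<noteq> V k" "V (Suc (Suc k)) \<noteq> V (Suc k)"
  shows "signed_angle (V (Suc k) - V k) (V (Suc (Suc k)) - V (Suc k))
    = view_angle V k (Suc k) + view_angle V (Suc (Suc k)) k"
proof -
  have "Arg ((V (Suc (Suc k)) - V (Suc k)) / (V (Suc k) - V k)) \<noteq> pi"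
    using assms by (intro Arg_ne_pi_if_segments_meet_at_vertex) auto
  then have "signed_angle (V (Suc k) - V k) (V (Suc (Suc k)) - V (Suc k))
      = signed_angle (V (Suc k) - V k) (V (Suc (Suc k)) - V k)
        + signed_angle (V (Suc (Suc k)) - V k) (V (Suc (Suc k)) - V (Suc k))"
    using signed_angle_add[of "V (Suc k) - V k" "V (Suc (Suc k)) - V (Suc k)"] assms(2,3) by simp
  then show ?thesis
    using signed_angle_uminus[of "V (Suc (Suc k)) - V k" "V (Suc (Suc k)) - V (Suc k)"]
    unfolding view_angle_def by simp
qed

lemma view_angle_fan_from_lowest:
  assumes "2 \<le> n" and lowest: "\<And>j. 0 < j \<Longrightarrow> j < n \<Longrightarrow> upper_half_plane (V j - V 0)"
  shows "(\<Sum>j=1..<n-1. view_angle V 0 j) = Arg (V (n - 1) - V 0) - Arg (V 1 - V 0)"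
proof -
  have "view_angle V 0 j = Arg (V (Suc j) - V 0) - Arg (V j - V 0)" if "j \<in> {1..<n-1}" for j
    unfolding view_angle_def using that by (intro signed_angle_upper_half_plane lowest) auto
  then have "(\<Sum>j=1..<n-1. view_angle V 0 j) = (\<Sum>j=1..<n-1. Arg (V (Suc j) - V 0) - Arg (V j - V 0))"
    by simp
  also have "\<dots> = Arg (V (n - 1) - V 0) - Arg (V 1 - V 0)"
    using assms(1) by (subst sum_Suc_diff') auto
  finally show ?thesis .
qed

lemma Arg_uminus_divide_upper_half_plane:
  assumes "upper_half_plane a" "upper_half_plane b"
  shows "Arg b - Arg a + Arg (- (a / b)) \<in> {pi, - pi}"
proof -
  have "Arg (a / b) = Arg a - Arg b"
    using signed_angle_upper_half_plane[OF assms(2,1)] by (simp add: signed_angle_def)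
  moreover have "a / b \<noteq> 0"
    using upper_half_plane_Arg(1) assms by simp
  ultimately show ?thesis
    using Arg_minus[of "a / b"] by auto
qed

lemma turning_number_from_lowest_vertex:
  fixes V :: "nat \<Rightarrow> complex" and n :: nat
  assumes three_le: "3 \<le> n"
    and periodic: "\<And>k. V (k + n) = V k"
    and nonadjacent_disjoint: "\<And>i j. i + 2 \<le> j \<Longrightarrow> j < n \<Longrightarrow> \<not> (i = 0 \<and> j = n - 1) \<Longrightarrow>
      closed_segment (V i) (V (Suc i)) \<inter> closed_segment (V j) (V (Suc j)) = {}"
    and adjacent_meet: "\<And>k. closed_segment (V k) (V (Suc k)) \<inter>
      closed_segment (V (Suc k)) (V (Suc (Suc k))) = {V (Suc k)}"
    and edge_nonzero: "\<And>k. V (Suc k) \<noteq> V k"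
    and lowest: "\<And>j. 0 < j \<Longrightarrow> j < n \<Longrightarrow> upper_half_plane (V j - V 0)"
  shows "(\<Sum>k<n. signed_angle (V (Suc k) - V k) (V (Suc (Suc k)) - V (Suc k))) \<in> {2 * pi, - 2 * pi}"
proof -
  define turn where "turn k = signed_angle (V (Suc k) - V k) (V (Suc (Suc k)) - V (Suc k))" for k
  define A B where "A = V 1 - V 0" and "B = V (n - 1) - V 0"
  have turn: "turn k = view_angle V k (Suc k) + view_angle V (Suc (Suc k)) k" for k
    unfolding turn_def using adjacent_meet edge_nonzero by (intro turn_eq_view_angles)
  have V_n: "V n = V 0" "V (Suc n) = V 1" "Suc (n - 1) = n"
    using periodic[of 0] periodic[of 1] three_le by auto
  have "(\<Sum>k<n-1. turn k)
      = (\<Sum>j=1..<n-1. view_angle V 0 j) + view_angle V (n - 1) 0 + view_angle V 1 (n - 1)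
        + (\<Sum>k=1..<n-1. view_angle V n k)"
    using view_angle_turns[of n V, OF three_le nonadjacent_disjoint] turn by (simp add: numeral_2_eq_2)
  moreover have "(\<Sum>k=1..<n-1. view_angle V n k) = (\<Sum>j=1..<n-1. view_angle V 0 j)"
    using V_n by (simp add: view_angle_def)
  moreover have "(\<Sum>j=1..<n-1. view_angle V 0 j) = Arg B - Arg A"
    unfolding A_def B_def using three_le lowest by (intro view_angle_fan_from_lowest) auto
  moreover have "view_angle V (n - 1) 0 + view_angle V 1 (n - 1) = turn (n - 1)"
    using turn[of "n - 1"] V_n by (simp add: view_angle_def)
  moreover have "turn (n - 1) = Arg (- (A / B))"
    using V_n unfolding turn_def signed_angle_def A_def B_def by (simp add: minus_divide_right)
  moreover have "(\<Sum>k<n. turn k) = (\<Sum>k<n-1. turn k) + turn (n - 1)"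
    using sum.lessThan_Suc[of turn "n - 1"] V_n by simp
  ultimately have "(\<Sum>k<n. turn k) = 2 * (Arg B - Arg A + Arg (- (A / B)))"
    by simp
  moreover have "Arg B - Arg A + Arg (- (A / B)) \<in> {pi, - pi}"
    unfolding A_def B_def using lowest three_le by (intro Arg_uminus_divide_upper_half_plane) auto
  ultimately show ?thesis
    unfolding turn_def by auto
qed

lemma simple_polygonD:
  assumes "simple_polygon n v" "i < n" "j < n" "i \<noteq> j"
  shows "if j = nxt n i then edge_seg n v i \<inter> edge_seg n v j = {v j}
    else if i = nxt n j then edge_seg n v i \<inter> edge_seg n v j = {v i}
    else edge_seg n v i \<inter> edge_seg n v j = {}"
  using assms unfolding simple_polygon_def by blast

lemma simple_polygon_adjacent:
  assumes simple: "simple_polygon n v" and "i < n"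
  shows "edge_seg n v i \<inter> edge_seg n v (nxt n i) = {v (nxt n i)}"
proof -
  have "3 \<le> n"
    using simple by (simp add: simple_polygon_def)
  then have "nxt n i < n" "i \<noteq> nxt n i"
    using nxt_less[of n i] nxt_neq[of n i] assms(2) by auto
  then show ?thesis
    using simple_polygonD[OF simple assms(2)] by simp
qed

lemma simple_polygon_nonadjacent:
  assumes "simple_polygon n v" "i < n" "j < n" "i \<noteq> j" "j \<noteq> nxt n i" "i \<noteq> nxt n j"
  shows "edge_seg n v i \<inter> edge_seg n v j = {}"
  using simple_polygonD[OF assms(1-4)] assms(5,6) by simp

lemma simple_polygon_shifted_nonadjacent:
  assumes simple: "simple_polygon n v" and ij: "i + 2 \<le> j" "j < n" "\<not> (i = 0 \<and> j = n - 1)"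
  shows "edge_seg n v ((i + m) mod n) \<inter> edge_seg n v ((j + m) mod n) = {}"
proof -
  have "Suc j mod n \<noteq> i"
    using ij by (cases "Suc j = n") auto
  then have "(i + m) mod n \<noteq> (Suc j mod n + m) mod n"
    using add_mod_eq_iff[of i n "Suc j mod n" m] ij by simp
  moreover have "(Suc j mod n + m) mod n = (Suc j + m) mod n"
    by (simp add: mod_add_left_eq)
  moreover have "(i + m) mod n \<noteq> (j + m) mod n" "(j + m) mod n \<noteq> (Suc i + m) mod n"
    using add_mod_eq_iff[of i n j m] add_mod_eq_iff[of j n "Suc i" m] ij by auto
  ultimately show ?thesis
    using ij by (intro simple_polygon_nonadjacent[OF simple]) (simp_all add: nxt_add_mod)
qed

lemma simple_polygon_vertices_distinct:
  assumes simple: "simple_polygon n v" and edge_nonzero: "\<forall>i<n. v (nxt n i) \<noteq> v i"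
    and "i < n" "j < n" "i \<noteq> j"
  shows "v i \<noteq> v j"
proof (cases "j = nxt n i \<or> i = nxt n j")
  case True
  then show ?thesis
    using edge_nonzero assms(3,4) by auto
next
  case False
  then have "edge_seg n v i \<inter> edge_seg n v j = {}"
    using simple_polygon_nonadjacent[OF simple assms(3-5)] by blast
  moreover have "v i \<in> edge_seg n v i" "v j \<in> edge_seg n v j"
    unfolding edge_seg_def by auto
  ultimately show ?thesis
    by auto
qed

lemma exists_lowest_vertex:
  fixes v :: "nat \<Rightarrow> complex"
  assumes "0 < n"
  obtains m where "m < n" "\<And>j. j < n \<Longrightarrow> v j \<noteq> v m \<Longrightarrow> upper_half_plane (v j - v m)"
proof -
  obtain j0 where "is_arg_min (\<lambda>j. Im (v j)) (\<lambda>j. j \<in> {..<n}) j0"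
    using ex_is_arg_min_if_finite[of "{..<n}"] assms by blast
  then have j0: "j0 < n" "\<And>j. j < n \<Longrightarrow> Im (v j0) \<le> Im (v j)"
    unfolding is_arg_min_def lessThan_iff by (meson not_less)+
  define T where "T = {j. j < n \<and> Im (v j) = Im (v j0)}"
  have "finite T" "T \<noteq> {}"
    using j0 by (auto simp: T_def)
  then obtain m where "is_arg_min (\<lambda>j. Re (v j)) (\<lambda>j. j \<in> T) m"
    using ex_is_arg_min_if_finite by blast
  then have m: "m < n" "Im (v m) = Im (v j0)" and leftmost: "\<And>j. j \<in> T \<Longrightarrow> Re (v m) \<le> Re (v j)"
    unfolding is_arg_min_def T_def by (auto simp: not_less)
  show ?thesis
  proof (rule that[OF m(1)])
    fix j assume j: "j < n" "v j \<noteq> v m"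
    have "Im (v m) \<le> Im (v j)"
      using j0 m j by simp
    moreover have "Re (v m) < Re (v j)" if "Im (v j) = Im (v m)"
      using leftmost[of j] m j that by (auto simp: T_def complex_eq_iff)
    ultimately show "upper_half_plane (v j - v m)"
      unfolding upper_half_plane_def by auto
  qed
qed

theorem turning_number:
  assumes simple: "simple_polygon n v" and edge_nonzero: "\<forall>i<n. v (nxt n i) \<noteq> v i"
  shows "(\<Sum>i<n. turn_angle n v i) \<in> {2 * pi, - 2 * pi}"
proof -
  have three_le: "3 \<le> n"
    using simple by (simp add: simple_polygon_def)
  then have n0: "0 < n"
    by simp
  obtain m where m: "m < n" and lowest: "\<And>j. j < n \<Longrightarrow> v j \<noteq> v m \<Longrightarrow> upper_half_plane (v j - v m)"
    using exists_lowest_vertex[OF n0] by blast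
  define V where "V k = v ((k + m) mod n)" for k
  have V_Suc: "V (Suc k) = v (nxt n ((k + m) mod n))" for k
    unfolding V_def nxt_add_mod ..
  have edge: "closed_segment (V k) (V (Suc k)) = edge_seg n v ((k + m) mod n)" for k
    unfolding edge_seg_def V_Suc by (simp add: V_def)
  have "(\<Sum>k<n. signed_angle (V (Suc k) - V k) (V (Suc (Suc k)) - V (Suc k))) \<in> {2 * pi, - 2 * pi}"
  proof (rule turning_number_from_lowest_vertex[OF three_le])
    show "V (k + n) = V k" for k
      using mod_add_self2[of "k + m" n] by (simp add: V_def ac_simps)
    show "closed_segment (V i) (V (Suc i)) \<inter> closed_segment (V j) (V (Suc j)) = {}"
      if "i + 2 \<le> j" "j < n" "\<not> (i = 0 \<and> j = n - 1)" for i j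
      unfolding edge using that by (intro simple_polygon_shifted_nonadjacent[OF simple])
    show "closed_segment (V k) (V (Suc k)) \<inter> closed_segment (V (Suc k)) (V (Suc (Suc k))) = {V (Suc k)}" for k
    proof -
      have "edge_seg n v ((k + m) mod n) \<inter> edge_seg n v ((Suc k + m) mod n) = {V (Suc k)}"
        using simple_polygon_adjacent[OF simple, of "(k + m) mod n"] n0
        unfolding V_Suc nxt_add_mod by simp
      then show ?thesis
        unfolding edge .
    qed
    show "V (Suc k) \<noteq> V k" for k
      unfolding V_Suc using edge_nonzero n0 by (simp add: V_def)
    show "upper_half_plane (V j - V 0)" if "0 < j" "j < n" for j
    proof -
      have "(j + m) mod n \<noteq> m"
        using that add_mod_eq_iff[of j n 0 m] m by simp
      then have "V j \<noteq> V 0"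
        unfolding V_def using simple_polygon_vertices_distinct[OF simple edge_nonzero] n0 m by simp
      then show ?thesis
        using lowest[of "(j + m) mod n"] n0 m by (simp add: V_def)
    qed
  qed
  moreover have "turn_angle n v ((k + Suc m) mod n)
      = signed_angle (V (Suc k) - V k) (V (Suc (Suc k)) - V (Suc k))" for k
    using prv_Suc_add_mod[OF n0, of k m] nxt_add_mod[of n "Suc k" m]
    unfolding turn_angle_def signed_angle_def V_def by simp
  ultimately show ?thesis
    using sum_add_mod[where n = n and c = "Suc m" and f = "turn_angle n v"] by simp
qed

section \<open>Fold lines\<close>

lemma Re_mult_one_minus_cis_double_eq_0:
  assumes "sin a \<noteq> 0"
  shows "Re (\<zeta> * (1 - cis (2 * a))) = 0 \<longleftrightarrow> Re \<zeta> = - Im \<zeta> * cot a"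
proof -
  have "Re (\<zeta> * (1 - cis (2 * a))) = Re \<zeta> * (1 - cos (2 * a)) + Im \<zeta> * sin (2 * a)"
    by simp
  also have "\<dots> = 2 * sin a * (Re \<zeta> * sin a + Im \<zeta> * cos a)"
    unfolding cos_double_sin sin_double by (simp add: algebra_simps power2_eq_square)
  finally have Re_eq: "Re (\<zeta> * (1 - cis (2 * a))) = 2 * sin a * (Re \<zeta> * sin a + Im \<zeta> * cos a)" .
  have "Re \<zeta> * sin a + Im \<zeta> * cos a = 0 \<longleftrightarrow> Re \<zeta> = - Im \<zeta> * cot a"
    using assms by (auto simp: cot_def field_simps)
  then show ?thesis
    unfolding Re_eq using assms by simp
qed

text \<open>An edge from \<open>p\<close> to \<open>p + l u\<close> with \<open>cmod u = 1\<close>, entered after a turn by \<open>t\<close> and left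
  after a turn by \<open>t'\<close>; the point \<open>z\<close> has coordinates \<open>(z - p) * cnj u\<close> in the frame of the edge.\<close>
lemma fold_lines_meet_iff:
  fixes p u z :: complex and l t t' :: real
  assumes u: "cmod u = 1" and sin_ne: "sin (t / 2) \<noteq> 0" "sin (t' / 2) \<noteq> 0"
    and K: "cot (t / 2) + cot (t' / 2) \<noteq> 0"
  shows "Re ((z - p) * cnj (u - u * cis (- t))) = 0 \<and>
      Re ((z - (p + of_real l * u)) * cnj (u * cis t' - u)) = 0 \<longleftrightarrow>
    (z - p) * cnj u = Complex (l * cot (t / 2) / (cot (t / 2) + cot (t' / 2)))
      (- l / (cot (t / 2) + cot (t' / 2)))"
proof -
  define a b where "a = t / 2" and "b = t' / 2"
  define x y where "x = Re ((z - p) * cnj u)" and "y = Im ((z - p) * cnj u)"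
  have zeta: "(z - p) * cnj u = Complex x y"
    unfolding x_def y_def complex_surj ..
  have "(z - p) * cnj (u - u * cis (- t)) = Complex x y * (1 - cis (2 * a))"
    unfolding zeta[symmetric] by (simp add: a_def cis_cnj algebra_simps)
  then have line1: "Re ((z - p) * cnj (u - u * cis (- t))) = 0 \<longleftrightarrow> x = - y * cot a"
    using Re_mult_one_minus_cis_double_eq_0[of a "Complex x y"] sin_ne by (simp add: a_def)
  have "u * cnj u = 1"
    using u complex_norm_square[of u] by simp
  moreover have "(z - (p + of_real l * u)) * cnj (u * cis t' - u)
      = - (((z - p) * cnj u - of_real l * (u * cnj u)) * (1 - cis (2 * - b)))"
    by (simp add: b_def cis_cnj algebra_simps)
  ultimately have "(z - (p + of_real l * u)) * cnj (u * cis t' - u)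
      = - (((z - p) * cnj u - of_real l) * (1 - cis (2 * - b)))"
    by simp
  then have line2: "Re ((z - (p + of_real l * u)) * cnj (u * cis t' - u)) = 0 \<longleftrightarrow> x - l = y * cot b"
    using Re_mult_one_minus_cis_double_eq_0[of "- b" "Complex x y - of_real l"] sin_ne
    unfolding zeta by (simp add: b_def) (metis)
  have "x = - y * cot a \<and> x - l = y * cot b \<longleftrightarrow> y * (cot a + cot b) = - l \<and> x = - y * cot a"
    by (auto simp: algebra_simps)
  also have "\<dots> \<longleftrightarrow> y = - l / (cot a + cot b) \<and> x = - y * cot a"
    using K by (auto simp: a_def b_def field_simps)
  also have "\<dots> \<longleftrightarrow> x = l * cot a / (cot a + cot b) \<and> y = - l / (cot a + cot b)"
    by auto
  finally show ?thesis
    unfolding line1 line2 zeta a_def b_def by (simp add: complex_eq_iff)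
qed

lemma fold_lines_strip_disjoint_iff:
  fixes p u :: complex and l t t' w :: real
  assumes "cmod u = 1" "sin (t / 2) \<noteq> 0" "sin (t' / 2) \<noteq> 0"
    and "cot (t / 2) + cot (t' / 2) \<noteq> 0"
  shows "{z. Re ((z - p) * cnj (u - u * cis (- t))) = 0}
      \<inter> {z. Re ((z - (p + of_real l * u)) * cnj (u * cis t' - u)) = 0}
      \<inter> {z. \<bar>Im ((z - p) * cnj u)\<bar> < w / 2} = {}
    \<longleftrightarrow> w / 2 \<le> \<bar>l / (cot (t / 2) + cot (t' / 2))\<bar>"
    (is "?S = {} \<longleftrightarrow> _")
proof -
  define \<zeta> where "\<zeta> = Complex (l * cot (t / 2) / (cot (t / 2) + cot (t' / 2)))
    (- l / (cot (t / 2) + cot (t' / 2)))"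
  have meet: "z \<in> ?S \<longleftrightarrow> (z - p) * cnj u = \<zeta> \<and> \<bar>Im ((z - p) * cnj u)\<bar> < w / 2" for z
    using fold_lines_meet_iff[OF assms, of z p l] unfolding \<zeta>_def by blast
  have "(p + u * \<zeta> - p) * cnj u = \<zeta>"
    using assms(1) complex_norm_square[of u] by (simp add: algebra_simps)
  then have "?S = {} \<longleftrightarrow> \<not> \<bar>Im \<zeta>\<bar> < w / 2"
    using meet[of "p + u * \<zeta>"] meet by (metis empty_iff equals0I)
  then show ?thesis
    by (simp add: \<zeta>_def abs_minus_cancel not_less)
qed

lemma edge_dir_turn:
  assumes "0 < n" "i < n" "v (nxt n i) \<noteq> v i" "v i \<noteq> v (prv n i)"
  shows "edge_dir n v i = edge_dir n v (prv n i) * cis (turn_angle n v i)"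
proof -
  have "cis (turn_angle n v i) = sgn (v (nxt n i) - v i) / sgn (v i - v (prv n i))"
    using assms(3,4) by (simp add: turn_angle_def cis_Arg sgn_divide)
  moreover have "sgn (v i - v (prv n i)) \<noteq> 0"
    using assms(4) by (simp add: sgn_eq_0_iff)
  ultimately show ?thesis
    unfolding edge_dir_def nxt_prv[OF assms(1,2)] by simp
qed

lemma fold_lines_disjoint_in_strip_iff:
  assumes n0: "0 < n" and i: "i < n" and edge_nonzero: "\<forall>i<n. v (nxt n i) \<noteq> v i"
    and sin_ne: "sin (turn_angle n v i / 2) \<noteq> 0" "sin (turn_angle n v (nxt n i) / 2) \<noteq> 0"
    and cot_ne: "cot (turn_angle n v i / 2) + cot (turn_angle n v (nxt n i) / 2) \<noteq> 0"
  shows "fold_line n v i \<inter> fold_line n v (nxt n i) \<inter> ribbon_strip n v w i = {} \<longleftrightarrow>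
    w * \<bar>cot (turn_angle n v i / 2) + cot (turn_angle n v (nxt n i) / 2)\<bar>
      \<le> 2 * cmod (v (nxt n i) - v i)"
proof -
  define u where "u = edge_dir n v i"
  define l where "l = cmod (v (nxt n i) - v i)"
  define t t' where "t = turn_angle n v i" and "t' = turn_angle n v (nxt n i)"
  have ni: "nxt n i < n"
    using nxt_less[OF n0] .
  have edge_nonzero': "v j \<noteq> v (prv n j)" if "j < n" for j
    using edge_nonzero prv_less[OF n0, of j] nxt_prv[OF n0 that] by metis
  have l: "0 < l"
    using edge_nonzero i by (simp add: l_def)
  have u: "cmod u = 1"
    using edge_nonzero i by (simp add: u_def edge_dir_def norm_sgn)
  have q: "v (nxt n i) = v i + of_real l * u"
    using l unfolding u_def l_def edge_dir_def by (simp add: sgn_div_norm scaleR_conv_of_real field_simps)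
  have "edge_dir n v (prv n i) * cis t = u"
    unfolding u_def t_def using edge_dir_turn[OF n0 i] edge_nonzero edge_nonzero' i by simp
  then have dir_prv: "edge_dir n v (prv n i) = u * cis (- t)"
    by (auto simp: mult.assoc cis_mult)
  have dir_nxt: "edge_dir n v (nxt n i) = u * cis t'"
    unfolding u_def t'_def using edge_dir_turn[OF n0 ni] edge_nonzero edge_nonzero' ni i
    by (simp add: prv_nxt[OF n0 i])
  have "fold_line n v i = {z. Re ((z - v i) * cnj (u - u * cis (- t))) = 0}"
    unfolding fold_line_def dir_prv u_def ..
  moreover have "fold_line n v (nxt n i) = {z. Re ((z - (v i + of_real l * u)) * cnj (u * cis t' - u)) = 0}"
    unfolding fold_line_def dir_nxt prv_nxt[OF n0 i] q u_def ..
  moreover have "ribbon_strip n v w i = {z. \<bar>Im ((z - v i) * cnj u)\<bar> < w / 2}"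
    unfolding ribbon_strip_def u_def ..
  moreover have "w / 2 \<le> \<bar>l / (cot (t / 2) + cot (t' / 2))\<bar>
      \<longleftrightarrow> w * \<bar>cot (t / 2) + cot (t' / 2)\<bar> \<le> 2 * l"
    using l cot_ne unfolding t_def t'_def by (simp add: abs_divide field_simps)
  ultimately show ?thesis
    using fold_lines_strip_disjoint_iff[OF u, of t t' "v i" l w] sin_ne cot_ne
    unfolding t_def t'_def l_def by simp
qed

lemma folded_ribbon_iff:
  assumes "0 < n" "\<forall>i<n. v (nxt n i) \<noteq> v i"
    and "\<forall>i<n. sin (turn_angle n v i / 2) \<noteq> 0"
    and "\<forall>i<n. cot (turn_angle n v i / 2) + cot (turn_angle n v (nxt n i) / 2) \<noteq> 0"
  shows "folded_ribbon n v w F \<longleftrightarrow> 0 < w \<and>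
    (\<forall>i<n. w * \<bar>cot (turn_angle n v i / 2) + cot (turn_angle n v (nxt n i) / 2)\<bar>
      \<le> 2 * cmod (v (nxt n i) - v i))"
  using assms fold_lines_disjoint_in_strip_iff[OF assms(1) _ assms(2)] nxt_less[OF assms(1)]
  unfolding folded_ribbon_def by simp

section \<open>The width bound\<close>

lemma strict_min_if_derivative_changes_sign:
  fixes f f' :: "real \<Rightarrow> real"
  assumes deriv: "\<And>x. l < x \<Longrightarrow> x < r \<Longrightarrow> (f has_real_derivative f' x) (at x)"
    and pos: "\<And>x. a < x \<Longrightarrow> x < r \<Longrightarrow> 0 < f' x" and neg: "\<And>x. l < x \<Longrightarrow> x < a \<Longrightarrow> f' x < 0"
    and "l < a" "a < r" "l < b" "b < r" "b \<noteq> a"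
  shows "f a < f b"
proof (cases "a < b")
  case True
  then obtain c where c: "a < c" "c < b" "f b - f a = (b - a) * f' c"
    using MVT2[of a b f f'] deriv assms(4-7) by force
  have "0 < (b - a) * f' c"
    using c pos[of c] True assms(7) by (intro mult_pos_pos) auto
  then show ?thesis
    using c(3) by linarith
next
  case False
  then obtain c where c: "b < c" "c < a" "f a - f b = (a - b) * f' c"
    using MVT2[of b a f f'] deriv assms(4-8) by force
  have "(a - b) * f' c < 0"
    using c neg[of c] False assms(6) by (intro mult_pos_neg) auto
  then show ?thesis
    using c(3) by linarith
qed

lemma cot_above_tangent:
  fixes a b :: real
  assumes a: "0 < a" "a < pi / 2" and b: "0 < b" "b < pi / 2" and "b \<noteq> a"
  shows "cot a - (b - a) / (sin a)\<^sup>2 < cot b"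
proof -
  define s where "s = (sin a)\<^sup>2"
  have sin_pos: "0 < sin x" if "0 < x" "x < pi / 2" for x
    using that by (intro sin_gt_zero) auto
  have s: "0 < s"
    using sin_pos[OF a] by (simp add: s_def)
  have f'_sign: "0 < - inverse ((sin x)\<^sup>2) + 1 / s \<longleftrightarrow> a < x"
    "- inverse ((sin x)\<^sup>2) + 1 / s < 0 \<longleftrightarrow> x < a" if "0 < x" "x < pi / 2" for x
  proof -
    have "0 < - inverse ((sin x)\<^sup>2) + 1 / s \<longleftrightarrow> s < (sin x)\<^sup>2"
      "- inverse ((sin x)\<^sup>2) + 1 / s < 0 \<longleftrightarrow> (sin x)\<^sup>2 < s"
      using s sin_pos[OF that] by (simp_all add: inverse_eq_divide field_simps)
    moreover have "s < (sin x)\<^sup>2 \<longleftrightarrow> sin a < sin x" "(sin x)\<^sup>2 < s \<longleftrightarrow> sin x < sin a"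
      unfolding s_def using sin_pos[OF that] sin_pos[OF a]
      by (meson less_eq_real_def power2_less_imp_less power_strict_mono zero_less_numeral)+
    moreover have "sin a < sin x \<longleftrightarrow> a < x" "sin x < sin a \<longleftrightarrow> x < a"
      using that a by (intro sin_mono_less_eq; simp)+
    ultimately show "0 < - inverse ((sin x)\<^sup>2) + 1 / s \<longleftrightarrow> a < x"
      "- inverse ((sin x)\<^sup>2) + 1 / s < 0 \<longleftrightarrow> x < a"
      by simp_all
  qed
  have "((\<lambda>x. cot x + x / s) has_real_derivative - inverse ((sin x)\<^sup>2) + 1 / s) (at x)"
    if "0 < x" "x < pi / 2" for x
  proof -
    have "sin x \<noteq> 0"
      using sin_pos[OF that] by simp
    then show ?thesis
      using s by (auto intro!: derivative_eq_intros)
  qed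
  then have "cot a + a / s < cot b + b / s"
    using f'_sign a b assms(5)
    by (intro strict_min_if_derivative_changes_sign[where l = 0 and r = "pi / 2" and f = "\<lambda>x. cot x + x / s"
      and f' = "\<lambda>x. - inverse ((sin x)\<^sup>2) + 1 / s"])
      auto
  then show ?thesis
    unfolding s_def by (simp add: diff_divide_distrib)
qed
lemma sum_cot_ge:
  fixes \<beta> :: "nat \<Rightarrow> real"
  assumes a: "0 < a" "a < pi / 2" and \<beta>: "\<forall>i<n. 0 < \<beta> i \<and> \<beta> i < pi / 2"
    and sum_\<beta>: "(\<Sum>i<n. \<beta> i) = real n * a"
  shows "real n * cot a \<le> (\<Sum>i<n. cot (\<beta> i))"
    and "(\<Sum>i<n. cot (\<beta> i)) = real n * cot a \<Longrightarrow> i < n \<Longrightarrow> \<beta> i = a"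
proof -
  define g where "g i = cot a - (\<beta> i - a) / (sin a)\<^sup>2" for i
  have g_less: "g i < cot (\<beta> i)" if "i < n" "\<beta> i \<noteq> a" for i
    unfolding g_def using cot_above_tangent[OF a] \<beta> that by simp
  have g_le: "g i \<le> cot (\<beta> i)" if "i < n" for i
    using g_less[OF that] by (cases "\<beta> i = a") (auto simp: g_def)
  have "(\<Sum>i<n. \<beta> i - a) = 0"
    using sum_\<beta> by (simp add: sum_subtractf)
  then have sum_g: "(\<Sum>i<n. g i) = real n * cot a"
    unfolding g_def by (simp add: sum_subtractf sum_divide_distrib[symmetric])
  then show "real n * cot a \<le> (\<Sum>i<n. cot (\<beta> i))"
    using g_le by (metis lessThan_iff sum_mono)
  show "\<beta> i = a" if "(\<Sum>i<n. cot (\<beta> i)) = real n * cot a" "i < n"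
  proof (rule ccontr)
    assume "\<beta> i \<noteq> a"
    then have "(\<Sum>i<n. g i) < (\<Sum>i<n. cot (\<beta> i))"
      using g_le g_less that(2) by (intro sum_strict_mono_ex1) auto
    then show False
      using sum_g that(1) by simp
  qed
qed

lemma interior_angle_sum:
  assumes nd: "nondegenerate_ngon n v" and less_pi: "\<forall>i<n. interior_angle n v i < pi"
  shows "(\<Sum>i<n. interior_angle n v i) = (real n - 2) * pi"
proof -
  define s where "s = sgn (signed_area n v)"
  have simple: "simple_polygon n v" and edge_nonzero: "\<forall>i<n. v (nxt n i) \<noteq> v i"
    using nd by (simp_all add: nondegenerate_ngon_def)
  then have n0: "0 < n"
    by (simp add: simple_polygon_def)
  have turn_pos: "0 < s * turn_angle n v i" if "i < n" for i
    using less_pi that by (simp add: interior_angle_def s_def)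
  have "(\<Sum>i<n. s * turn_angle n v i) = s * (\<Sum>i<n. turn_angle n v i)"
    by (simp add: sum_distrib_left)
  moreover have "0 < (\<Sum>i<n. s * turn_angle n v i)"
    using turn_pos n0 by (intro sum_pos) auto
  moreover have "s = 1 \<or> s = -1 \<or> s = 0"
    by (simp add: s_def sgn_if)
  ultimately have "(\<Sum>i<n. s * turn_angle n v i) = 2 * pi"
    using turning_number[OF simple edge_nonzero] by auto
  then show ?thesis
    by (simp add: interior_angle_def s_def sum_subtractf algebra_simps)
qed

lemma turn_angle_eq_exterior_angle:
  assumes "signed_area n v \<noteq> 0"
  shows "turn_angle n v i = sgn (signed_area n v) * (pi - interior_angle n v i)"
  using assms by (auto simp: interior_angle_def sgn_if)

lemma folded_ribbon_cot_sum_le: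
  assumes nd: "nondegenerate_ngon n v"
    and angles: "\<forall>i<n. 0 < interior_angle n v i \<and> interior_angle n v i < pi"
    and ribbon: "folded_ribbon n v w F"
  shows "w * (\<Sum>i<n. cot ((pi - interior_angle n v i) / 2)) \<le> polygon_length n v"
proof -
  have edge_nonzero: "\<forall>i<n. v (nxt n i) \<noteq> v i" and n0: "0 < n"
    using nd by (simp_all add: nondegenerate_ngon_def simple_polygon_def)
  define s where "s = sgn (signed_area n v)"
  define \<beta> where "\<beta> i = (pi - interior_angle n v i) / 2" for i
  have \<beta>: "0 < \<beta> i" "\<beta> i < pi / 2" if "i < n" for i
    using angles that by (auto simp: \<beta>_def)
  have "signed_area n v \<noteq> 0"
    using angles n0 by (auto simp: interior_angle_def)
  then have s: "s = 1 \<or> s = -1" and half_turn: "turn_angle n v i / 2 = s * \<beta> i" for i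
    using turn_angle_eq_exterior_angle[of n v i] by (auto simp: s_def \<beta>_def sgn_if)
  have cot_pos: "0 < cot (\<beta> i)" if "i < n" for i
    using \<beta>[OF that] by (intro cot_gt_zero)
  have sin_half_turn: "\<forall>i<n. sin (turn_angle n v i / 2) \<noteq> 0"
    using s \<beta> sin_gt_zero2 unfolding half_turn by fastforce
  have K: "\<bar>cot (turn_angle n v i / 2) + cot (turn_angle n v (nxt n i) / 2)\<bar>
      = cot (\<beta> i) + cot (\<beta> (nxt n i))" if "i < n" for i
    using s cot_pos[OF that] cot_pos[OF nxt_less[OF n0, of i]] unfolding half_turn by auto
  then have "\<forall>i<n. cot (turn_angle n v i / 2) + cot (turn_angle n v (nxt n i) / 2) \<noteq> 0"
    using cot_pos nxt_less[OF n0] by (metis abs_zero add_pos_pos less_irrefl)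
  then have "\<forall>i<n. w * (cot (\<beta> i) + cot (\<beta> (nxt n i))) \<le> 2 * cmod (v (nxt n i) - v i)"
    using ribbon folded_ribbon_iff[OF n0 edge_nonzero sin_half_turn] K by simp
  then have "(\<Sum>i<n. w * (cot (\<beta> i) + cot (\<beta> (nxt n i)))) \<le> (\<Sum>i<n. 2 * cmod (v (nxt n i) - v i))"
    by (intro sum_mono) auto
  moreover have "(\<Sum>i<n. cot (\<beta> (nxt n i))) = (\<Sum>i<n. cot (\<beta> i))"
    using sum_add_mod[where c = 1 and f = "\<lambda>i. cot (\<beta> i)"] by (simp add: nxt_def)
  ultimately show ?thesis
    by (simp add: \<beta>_def polygon_length_def sum.distrib sum_distrib_left[symmetric])
qed

theorem folded_ribbon_width_le:
  assumes nd: "nondegenerate_ngon n v" and len: "polygon_length n v = 1"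
    and angles: "\<forall>i<n. pi / 2 \<le> interior_angle n v i \<and> interior_angle n v i < pi"
    and ribbon: "folded_ribbon n v w F"
  shows "w \<le> 1 / (real n * cot (pi / real n))"
    and "w = 1 / (real n * cot (pi / real n)) \<Longrightarrow> equiangular n v"
proof -
  have three_le: "3 \<le> n"
    using nd by (simp add: nondegenerate_ngon_def simple_polygon_def)
  define \<beta> where "\<beta> i = (pi - interior_angle n v i) / 2" for i
  have \<beta>: "\<forall>i<n. 0 < \<beta> i \<and> \<beta> i < pi / 2"
    using angles by (auto simp: \<beta>_def)
  have "\<forall>i<n. 0 < interior_angle n v i \<and> interior_angle n v i < pi"
    using angles pi_half_gt_zero by (meson less_le_trans)
  then have width_cot: "w * (\<Sum>i<n. cot (\<beta> i)) \<le> 1"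
    using folded_ribbon_cot_sum_le[OF nd _ ribbon] len unfolding \<beta>_def by simp
  have a: "0 < pi / real n" "pi / real n < pi / 2"
    using three_le by (auto simp: field_simps)
  have "(\<Sum>i<n. \<beta> i) = real n * (pi / real n)"
    using interior_angle_sum[OF nd] angles three_le
    by (simp add: \<beta>_def sum_divide_distrib[symmetric] sum_subtractf algebra_simps)
  note cot_sum = sum_cot_ge[OF a \<beta> this]
  have n_cot: "0 < real n * cot (pi / real n)"
    using a three_le cot_gt_zero by simp
  then have "w \<le> 1 / (\<Sum>i<n. cot (\<beta> i))"
    using width_cot cot_sum(1) by (simp add: field_simps)
  also have "\<dots> \<le> 1 / (real n * cot (pi / real n))"
    using n_cot cot_sum(1) by (simp add: frac_le)
  finally show "w \<le> 1 / (real n * cot (pi / real n))" .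
  show "equiangular n v" if "w = 1 / (real n * cot (pi / real n))"
  proof -
    have "(\<Sum>i<n. cot (\<beta> i)) = real n * cot (pi / real n)"
      using width_cot n_cot cot_sum(1) unfolding that by (simp add: field_simps)
    then have "interior_angle n v i = pi - 2 * (pi / real n)" if "i < n" for i
      using cot_sum(2)[OF _ that] unfolding \<beta>_def by (simp add: field_simps)
    then show ?thesis
      unfolding equiangular_def by simp
  qed
qed

section \<open>The regular polygon\<close>

lemma segment_in_halfspace_touching:
  fixes a b z c :: "'a :: real_inner"
  assumes "z \<in> closed_segment a b" "inner c a \<le> M" "inner c b < M" "M \<le> inner c z"
  shows "z = a"
proof -
  obtain u where u: "0 \<le> u" "u \<le> 1" "z = (1 - u) *\<^sub>R a + u *\<^sub>R b"
    using assms(1) unfolding in_segment by auto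
  then have "inner c z = (1 - u) * inner c a + u * inner c b"
    by (simp add: inner_add_right)
  moreover have "(1 - u) * inner c a \<le> (1 - u) * M"
    using assms(2) u by (intro mult_left_mono) auto
  ultimately have "M \<le> (1 - u) * M + u * inner c b"
    using assms(4) by linarith
  then have "u * (M - inner c b) \<le> 0"
    by (simp add: algebra_simps)
  then have "u = 0"
    using u(1) assms(3) by (simp add: mult_le_0_iff)
  then show ?thesis
    using u(3) by simp
qed

lemma closed_segments_meet_on_supporting_line:
  fixes p q r c :: "'a :: real_inner"
  assumes "inner c p = inner c q" "inner c r < inner c q"
  shows "closed_segment p q \<inter> closed_segment q r = {q}"
proof
  have "closed_segment p q \<subseteq> {z. inner c q \<le> inner c z}"
    using assms(1) by (intro closed_segment_subset convex_halfspace_ge) auto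
  then show "closed_segment p q \<inter> closed_segment q r \<subseteq> {q}"
    using segment_in_halfspace_touching[of _ q r c "inner c q"] assms(2) by auto
qed auto

lemma closed_segments_disjoint_by_supporting_line:
  fixes p q a b c :: "'a :: real_inner"
  assumes "inner c p = inner c q" "inner c a < inner c p" "inner c b < inner c p"
  shows "closed_segment p q \<inter> closed_segment a b = {}"
proof -
  have "closed_segment p q \<subseteq> {z. inner c p \<le> inner c z}"
    using assms(1) by (intro closed_segment_subset convex_halfspace_ge) auto
  moreover have "closed_segment a b \<subseteq> {z. inner c z < inner c p}"
    using assms(2,3) by (intro closed_segment_subset convex_halfspace_lt) auto
  ultimately show ?thesis
    by fastforce
qed

lemma simple_polygon_if_supporting_lines:
  assumes three_le: "3 \<le> n"
    and support: "\<And>i. i < n \<Longrightarrow> \<exists>c. inner c (v (nxt n i)) = inner c (v i) \<and>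
      (\<forall>k<n. k \<noteq> i \<and> k \<noteq> nxt n i \<longrightarrow> inner c (v k) < inner c (v i))"
  shows "simple_polygon n v"
proof -
  have n0: "0 < n"
    using three_le by simp
  have adjacent: "edge_seg n v i \<inter> edge_seg n v (nxt n i) = {v (nxt n i)}" if "i < n" for i
  proof -
    obtain c where c: "inner c (v (nxt n i)) = inner c (v i)"
      "\<forall>k<n. k \<noteq> i \<and> k \<noteq> nxt n i \<longrightarrow> inner c (v k) < inner c (v i)"
      using support[OF \<open>i < n\<close>] by blast
    have "inner c (v (nxt n (nxt n i))) < inner c (v (nxt n i))"
      using c nxt_less[OF n0] nxt_nxt_neq[OF three_le that] nxt_neq[of n "nxt n i"] three_le by simp
    then show ?thesis
      unfolding edge_seg_def using c(1) by (intro closed_segments_meet_on_supporting_line[where c = c]) auto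
  qed
  have nonadjacent: "edge_seg n v i \<inter> edge_seg n v j = {}"
    if "i < n" "j < n" "i \<noteq> j" "j \<noteq> nxt n i" "i \<noteq> nxt n j" for i j
  proof -
    obtain c where c: "inner c (v (nxt n i)) = inner c (v i)"
      "\<forall>k<n. k \<noteq> i \<and> k \<noteq> nxt n i \<longrightarrow> inner c (v k) < inner c (v i)"
      using support[OF \<open>i < n\<close>] by blast
    then show ?thesis
      unfolding edge_seg_def using that nxt_less[OF n0] nxt_inj[of j n i]
      by (intro closed_segments_disjoint_by_supporting_line) auto
  qed
  show ?thesis
    unfolding simple_polygon_def
    using three_le adjacent nonadjacent by (auto simp: Int_commute)
qed

lemma cos_less_cos_away_from_zero:
  fixes t x :: real
  assumes "0 \<le> t" "t < \<bar>x\<bar>" "\<bar>x\<bar> < 2 * pi - t"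
  shows "cos x < cos t"
proof (cases "\<bar>x\<bar> \<le> pi")
  case True
  then have "cos \<bar>x\<bar> < cos t"
    using assms by (intro cos_monotone_0_pi) auto
  then show ?thesis
    by simp
next
  case False
  then have "cos (2 * pi - \<bar>x\<bar>) < cos t"
    using assms by (intro cos_monotone_0_pi) auto
  then show ?thesis
    by (simp add: cos_2pi_minus)
qed

lemma cis_add_2pi: "cis (x + 2 * pi) = cis x"
  by (simp flip: cis_mult)

definition regular_ngon :: "nat \<Rightarrow> nat \<Rightarrow> complex" where
  "regular_ngon n k = of_real (1 / (2 * real n * sin (pi / real n))) * cis (2 * real k * pi / real n)"

context
  fixes n :: nat
  assumes three_le: "3 \<le> n"
begin

definition \<theta> :: real where
  "\<theta> = pi / real n"

definition circumradius :: real where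
  "circumradius = 1 / (2 * real n * sin \<theta>)"

lemma n_pos: "0 < n"
  using three_le by simp

lemma n_\<theta>: "real n * \<theta> = pi"
  using n_pos by (simp add: \<theta>_def)

lemma \<theta>_bounds: "0 < \<theta>" "3 * \<theta> \<le> pi"
  using three_le by (auto simp: \<theta>_def field_simps)

lemma sin_\<theta>_pos: "0 < sin \<theta>"
  using \<theta>_bounds by (auto intro!: sin_gt_zero)

lemma circumradius_pos: "0 < circumradius"
  using sin_\<theta>_pos n_pos by (simp add: circumradius_def)

lemma regular_ngon_eq: "regular_ngon n k = of_real circumradius * cis (2 * real k * \<theta>)"
  by (simp add: regular_ngon_def circumradius_def \<theta>_def)

lemma regular_ngon_mod: "regular_ngon n (k mod n) = regular_ngon n k"
proof -
  have "real k = real (k mod n) + real n * real (k div n)"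
    by (metis mod_mult_div_eq of_nat_add of_nat_mult)
  then have "2 * real k * \<theta> = 2 * real (k mod n) * \<theta> + 2 * pi * real (k div n)"
    using n_\<theta> by (simp add: algebra_simps)
  then show ?thesis
    unfolding regular_ngon_eq by (simp add: cis_mult[symmetric] cis_multiple_2pi)
qed

lemma regular_ngon_nxt: "regular_ngon n (nxt n i) = regular_ngon n (Suc i)"
  unfolding nxt_def by (rule regular_ngon_mod)

lemma regular_ngon_prv: "regular_ngon n (prv n i) = regular_ngon n (i + n - 1)"
  unfolding prv_def by (rule regular_ngon_mod)

lemma regular_edge:
  "regular_ngon n (Suc k) - regular_ngon n k = of_real (1 / real n) * (\<i> * cis ((2 * real k + 1) * \<theta>))"
proof -
  have "cis (2 * real (Suc k) * \<theta>) - cis (2 * real k * \<theta>)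
      = cis ((2 * real k + 1) * \<theta>) * (cis \<theta> - cis (- \<theta>))"
    by (simp add: cis_mult algebra_simps)
  also have "cis \<theta> - cis (- \<theta>) = \<i> * of_real (2 * sin \<theta>)"
    by (simp add: complex_eq_iff)
  finally show ?thesis
    unfolding regular_ngon_eq circumradius_def right_diff_distrib[symmetric]
    using sin_\<theta>_pos n_pos by (simp add: field_simps)
qed

lemma regular_edge_length: "cmod (regular_ngon n (nxt n i) - regular_ngon n i) = 1 / real n"
  unfolding regular_ngon_nxt regular_edge by (simp add: norm_mult norm_divide)

lemma regular_edge_nonzero: "regular_ngon n (nxt n i) \<noteq> regular_ngon n i"
  using regular_edge_length[of i] n_pos by auto

lemma regular_polygon_length: "polygon_length n (regular_ngon n) = 1"
  unfolding polygon_length_def regular_edge_length using n_pos by simp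

lemma regular_turn_angle: "turn_angle n (regular_ngon n) i = 2 * \<theta>"
proof -
  define e where "e = of_real (1 / real n) * (\<i> * cis ((2 * real i + 1) * \<theta>))"
  have "(2 * real (i + n - 1) + 1) * \<theta> = (2 * real i + 1) * \<theta> - 2 * \<theta> + 2 * (real n * \<theta>)"
    using n_pos by (simp add: algebra_simps)
  then have angle: "(2 * real (i + n - 1) + 1) * \<theta> = (2 * real i + 1) * \<theta> - 2 * \<theta> + 2 * pi"
    unfolding n_\<theta> .
  have "regular_ngon n i - regular_ngon n (prv n i)
      = regular_ngon n (Suc (i + n - 1)) - regular_ngon n (i + n - 1)"
    using n_pos regular_ngon_mod[of "i + n"] regular_ngon_mod[of i] by (simp add: regular_ngon_prv)
  also have "\<dots> = e / cis (2 * \<theta>)"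
    unfolding regular_edge angle cis_add_2pi cis_divide[symmetric] e_def by simp
  finally have "(regular_ngon n (nxt n i) - regular_ngon n i) / (regular_ngon n i - regular_ngon n (prv n i))
      = cis (2 * \<theta>)"
    unfolding regular_ngon_nxt regular_edge e_def[symmetric] using n_pos by (simp add: e_def)
  moreover have "Arg (cis (2 * \<theta>)) = 2 * \<theta>"
    using \<theta>_bounds by (intro Arg_cis) auto
  ultimately show ?thesis
    unfolding turn_angle_def by simp
qed

lemma regular_signed_area_pos: "0 < signed_area n (regular_ngon n)"
proof -
  have "Im (cnj (regular_ngon n i) * regular_ngon n (nxt n i)) = circumradius\<^sup>2 * sin (2 * \<theta>)" for i
  proof -
    have "cnj (regular_ngon n i) * regular_ngon n (nxt n i)
        = of_real (circumradius\<^sup>2) * (cis (- (2 * real i * \<theta>)) * cis (2 * real (Suc i) * \<theta>))"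
      unfolding regular_ngon_nxt unfolding regular_ngon_eq
      by (simp add: cis_cnj power2_eq_square algebra_simps)
    also have "cis (- (2 * real i * \<theta>)) * cis (2 * real (Suc i) * \<theta>) = cis (2 * \<theta>)"
      by (simp add: cis_mult algebra_simps)
    finally show ?thesis
      by simp
  qed
  moreover have "0 < sin (2 * \<theta>)"
    using \<theta>_bounds by (intro sin_gt_zero) auto
  ultimately show ?thesis
    unfolding signed_area_def using circumradius_pos n_pos by simp
qed

lemma regular_interior_angle: "interior_angle n (regular_ngon n) i = pi - 2 * \<theta>"
  unfolding interior_angle_def regular_turn_angle using regular_signed_area_pos by simp

lemma regular_support:
  "inner (cis ((2 * real i + 1) * \<theta>)) (regular_ngon n k)
    = circumradius * cos ((2 * real k - 2 * real i - 1) * \<theta>)"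
proof -
  have "(2 * real k - 2 * real i - 1) * \<theta> = 2 * real k * \<theta> - (2 * real i + 1) * \<theta>"
    by (simp add: algebra_simps)
  then show ?thesis
    unfolding regular_ngon_eq by (simp add: inner_complex_def cos_diff algebra_simps)
qed

lemma regular_support_less:
  assumes "k < n" "i < n" "k \<noteq> i" "k \<noteq> nxt n i"
  shows "cos ((2 * real k - 2 * real i - 1) * \<theta>) < cos \<theta>"
proof -
  define d where "d = 2 * real k - 2 * real i - 1"
  have "3 \<le> \<bar>d\<bar> \<and> \<bar>d\<bar> \<le> 2 * real n - 3"
  proof (cases "i < k")
    case True
    then have "Suc i < n" "nxt n i = Suc i"
      using assms(1) by (auto simp: nxt_def)
    then show ?thesis
      using True assms by (auto simp: d_def)
  next
    case False
    have "\<not> (k = 0 \<and> i = n - 1)"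
      using assms(4) n_pos by (auto simp: nxt_def)
    then show ?thesis
      using False assms by (auto simp: d_def)
  qed
  then have "3 * \<theta> \<le> \<bar>d * \<theta>\<bar> \<and> \<bar>d * \<theta>\<bar> \<le> (2 * real n - 3) * \<theta>"
    using \<theta>_bounds by (auto simp: abs_mult intro: mult_right_mono)
  moreover have "(2 * real n - 3) * \<theta> = 2 * pi - 3 * \<theta>"
    using n_\<theta> by (simp add: algebra_simps)
  ultimately show ?thesis
    unfolding d_def[symmetric] using \<theta>_bounds by (intro cos_less_cos_away_from_zero) auto
qed

lemma regular_simple: "simple_polygon n (regular_ngon n)"
proof (rule simple_polygon_if_supporting_lines[OF three_le])
  fix i assume i: "i < n"
  define c where "c = cis ((2 * real i + 1) * \<theta>)"
  have "inner c (regular_ngon n i) = circumradius * cos \<theta>"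
    "inner c (regular_ngon n (nxt n i)) = circumradius * cos \<theta>"
    unfolding c_def regular_support regular_ngon_nxt by (simp_all add: algebra_simps)
  moreover have "inner c (regular_ngon n k) < circumradius * cos \<theta>"
    if "k < n" "k \<noteq> i" "k \<noteq> nxt n i" for k
    unfolding c_def regular_support using regular_support_less[OF that(1) i that(2,3)] circumradius_pos
    by simp
  ultimately show "\<exists>c. inner c (regular_ngon n (nxt n i)) = inner c (regular_ngon n i) \<and>
      (\<forall>k<n. k \<noteq> i \<and> k \<noteq> nxt n i \<longrightarrow> inner c (regular_ngon n k) < inner c (regular_ngon n i))"
    by metis
qed

lemma regular_nondegenerate: "nondegenerate_ngon n (regular_ngon n)"
  unfolding nondegenerate_ngon_def regular_interior_angle
  using regular_simple regular_edge_nonzero \<theta>_bounds by simp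

lemma regular_folded_ribbon: "folded_ribbon n (regular_ngon n) (1 / (real n * cot \<theta>)) F"
proof -
  have "0 < cot \<theta>"
    using \<theta>_bounds by (intro cot_gt_zero) auto
  then show ?thesis
    using folded_ribbon_iff[OF n_pos] regular_edge_nonzero sin_\<theta>_pos n_pos
    by (simp add: regular_turn_angle regular_edge_length)
qed

end

theorem proposition6p4:
  fixes n :: nat
  assumes "4 \<le> n"
  shows "(\<forall>(v :: nat \<Rightarrow> complex) (w :: real) (F :: nat \<Rightarrow> bool).
            nondegenerate_ngon n v \<and> polygon_length n v = 1 \<and>
            (\<forall>i<n. pi / 2 \<le> interior_angle n v i \<and> interior_angle n v i < pi) \<and>
            folded_ribbon n v w F \<longrightarrow>
              w \<le> 1 / (real n * cot (pi / real n)) \<and>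
              (w = 1 / (real n * cot (pi / real n)) \<longrightarrow> equiangular n v))
       \<and> (\<exists>(v :: nat \<Rightarrow> complex) (F :: nat \<Rightarrow> bool).
            nondegenerate_ngon n v \<and> polygon_length n v = 1 \<and>
            (\<forall>i<n. pi / 2 \<le> interior_angle n v i \<and> interior_angle n v i < pi) \<and>
            equiangular n v \<and>
            folded_ribbon n v (1 / (real n * cot (pi / real n))) F)"
proof (intro conjI allI impI)
  fix v w F
  assume "nondegenerate_ngon n v \<and> polygon_length n v = 1 \<and>
    (\<forall>i<n. pi / 2 \<le> interior_angle n v i \<and> interior_angle n v i < pi) \<and> folded_ribbon n v w F"
  then show "w \<le> 1 / (real n * cot (pi / real n))"
    and "w = 1 / (real n * cot (pi / real n)) \<Longrightarrow> equiangular n v"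
    using folded_ribbon_width_le by blast+
next
  have three_le: "3 \<le> n"
    using assms by simp
  have "pi / 2 \<le> pi - 2 * \<theta> n" "pi - 2 * \<theta> n < pi"
    using assms \<theta>_bounds(1)[OF three_le] by (auto simp: \<theta>_def[OF three_le] field_simps)
  then show "\<exists>v F. nondegenerate_ngon n v \<and> polygon_length n v = 1 \<and>
      (\<forall>i<n. pi / 2 \<le> interior_angle n v i \<and> interior_angle n v i < pi) \<and>
      equiangular n v \<and> folded_ribbon n v (1 / (real n * cot (pi / real n))) F"
    using regular_nondegenerate[OF three_le] regular_polygon_length[OF three_le]
      regular_interior_angle[OF three_le] regular_folded_ribbon[OF three_le]
    by (intro exI[of _ "regular_ngon n"] exI[of _ "\<lambda>_. True"]) (auto simp: equiangular_def \<theta>_def[OF three_le])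
qed

end
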